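(* Let $k\ge 1$ be an integer and let $GP(3k,k)$ be the generalised Petersen graph. If $k$ is odd, the number of $1$-factorisations of $GP(3k,k)$ equals the Jacobsthal number $J(k)$; if $k$ is even, the number of $1$-factorisations of $GP(3k,k)$ equals $4J(k)$.
   Context: For integers $n,k$ with $1\le k<n/2$, the generalised Petersen graph $GP(n,k)$ has vertex set $\{u_i,v_i : i\in\mathbb{Z}_n\}$ and edge set $\{u_iu_{i+1},\ u_iv_i,\ v_iv_{i+k} : i\in\mathbb{Z}_n\}$ (indices modulo $n$). A $1$-factorisation of a graph is a partition of its edge set into perfect matchings (unordered). The Jacobsthal numbers are defined by $J(0)=0$, $J(1)=1$ and $J(k)=J(k-1)+2J(k-2)$ for $k\ge 2$. *)

theory Defs
  imports Main "HOL-Library.Disjoint_Sets"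
begin

text \<open>Vertices of GP(n,k): (False,i) is u_i, (True,i) is v_i, for i < n.
  Edges are represented as two-element sets of vertices.\<close>

definition GP_verts :: "nat \<Rightarrow> (bool \<times> nat) set" where
  "GP_verts n = UNIV \<times> {..<n}"

definition GP_edges :: "nat \<Rightarrow> nat \<Rightarrow> (bool \<times> nat) set set" where
  "GP_edges n k =
     {{(False, i), (False, (i + 1) mod n)} | i. i < n}
   \<union> {{(False, i), (True, i)} | i. i < n}
   \<union> {{(True, i), (True, (i + k) mod n)} | i. i < n}"

definition perfect_matching :: "'a set \<Rightarrow> 'a set set \<Rightarrow> 'a set set \<Rightarrow> bool" where
  "perfect_matching V E M \<longleftrightarrow> M \<subseteq> E \<and> (\<forall>x\<in>V. \<exists>!e. e \<in> M \<and> x \<in> e)"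

definition one_factorisation :: "'a set \<Rightarrow> 'a set set \<Rightarrow> 'a set set set \<Rightarrow> bool" where
  "one_factorisation V E F \<longleftrightarrow> partition_on E F \<and> (\<forall>M\<in>F. perfect_matching V E M)"

fun jacobsthal :: "nat \<Rightarrow> nat" where
  "jacobsthal 0 = 0"
| "jacobsthal (Suc 0) = 1"
| "jacobsthal (Suc (Suc k)) = jacobsthal (Suc k) + 2 * jacobsthal k"

end

theory Submission
  imports Defs "HOL-Library.FuncSet"
begin

text \<open>A 1-factorisation of a cubic graph is a proper 3-edge-colouring up to renaming the colours;
  we normalise by giving the two outer edges at u_0 the colours 0 and 1. In GP(3k, k) such a
  colouring is determined by its restriction c to the outer cycle: the spoke at u_i gets the
  colour missing at u_i, and since the inner edges form the k triangles v_j v_{j+k} v_{j+2k},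
  the colouring extends, uniquely, exactly when the three spokes of each triangle have distinct
  colours. Reading c in columns (c_j, c_{j+k}, c_{j+2k}), j < k, turns these local conditions
  into closed walks of length k in a transfer system on 27 colour triples. Its transfer matrix T
  satisfies T (T^2 - 1) (T^2 - 4) = 0, so the number a_k of factorisations obeys
  a_{k+4} = 5 a_{k+2} - 4 a_k; so does J(k) for odd and 4 J(k) for even k, and five initial
  values agree.\<close>

section \<open>Walks in a finite transition system\<close>


fun walk_ends :: "'a list \<Rightarrow> ('a \<Rightarrow> 'a \<Rightarrow> bool) \<Rightarrow> nat \<Rightarrow> 'a \<Rightarrow> 'a list" where
  "walk_ends S R 0 a = [a]"
| "walk_ends S R (Suc j) a = concat (map (walk_ends S R j) (filter (R a) S))"

lemma walk_ends_numeral [simp]: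
  "walk_ends S R (numeral n) a = concat (map (walk_ends S R (pred_numeral n)) (filter (R a) S))"
  by (simp add: numeral_eq_Suc)

lemma sum_list_map_concat:
  "(\<Sum>x\<leftarrow>concat xss. f x) = (\<Sum>xs\<leftarrow>xss. \<Sum>x\<leftarrow>xs. f x)"
  by (induction xss) simp_all

lemma concat_map_concat_map:
  "concat (map (\<lambda>x. concat (map g (h x))) xs) = concat (map g (concat (map h xs)))"
  by (induction xs) simp_all

lemma walk_ends_add:
  "walk_ends S R (m + j) a = concat (map (walk_ends S R j) (walk_ends S R m a))"
proof (induction m arbitrary: a)
  case (Suc m)
  then have "walk_ends S R (m + j) = (\<lambda>x. concat (map (walk_ends S R j) (walk_ends S R m x)))"
    by blast
  then show ?case by (simp add: concat_map_concat_map)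
qed simp

lemma sum_list_walk_ends_add:
  "(\<Sum>b\<leftarrow>walk_ends S R (m + j) a. f b) = (\<Sum>x\<leftarrow>walk_ends S R m a. \<Sum>b\<leftarrow>walk_ends S R j x. f b)"
  unfolding walk_ends_add by (simp add: sum_list_map_concat o_def)

definition walks :: "'a list \<Rightarrow> ('a \<Rightarrow> 'a \<Rightarrow> bool) \<Rightarrow> nat \<Rightarrow> 'a \<Rightarrow> ('a \<Rightarrow> bool) \<Rightarrow> 'a list set" where
  "walks S R j a P =
     {T. length T = Suc j \<and> set T \<subseteq> set S \<and> successively R T \<and> hd T = a \<and> P (last T)}"

lemma finite_walks: "finite (walks S R j a P)"
proof (rule finite_subset)
  show "walks S R j a P \<subseteq> {T. set T \<subseteq> set S \<and> length T = Suc j}"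
    by (auto simp: walks_def)
qed (rule finite_lists_length_eq, simp)

lemma walks_Suc:
  assumes "a \<in> set S"
  shows "walks S R (Suc j) a P = (\<Union>x\<in>set (filter (R a) S). (#) a ` walks S R j x P)"
proof (intro equalityI subsetI)
  fix T assume "T \<in> walks S R (Suc j) a P"
  then obtain x T' where "T = a # x # T'" "x \<in> set (filter (R a) S)" "x # T' \<in> walks S R j x P"
    by (auto simp: walks_def length_Suc_conv)
  then show "T \<in> (\<Union>x\<in>set (filter (R a) S). (#) a ` walks S R j x P)" by blast
next
  fix T assume "T \<in> (\<Union>x\<in>set (filter (R a) S). (#) a ` walks S R j x P)"
  then obtain x T' where "T = a # T'" "R a x" "x \<in> set S" "T' \<in> walks S R j x P"
    by auto
  moreover then obtain T'' where "T' = x # T''" by (cases T') (auto simp: walks_def)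
  ultimately show "T \<in> walks S R (Suc j) a P" using assms by (auto simp: walks_def)
qed

lemma card_walks:
  assumes "distinct S" "a \<in> set S"
  shows "card (walks S R j a P) = length (filter P (walk_ends S R j a))"
  using assms(2)
proof (induction j arbitrary: a)
  case 0
  then have "walks S R 0 a P = (if P a then {[a]} else {})"
    by (auto simp: walks_def length_Suc_conv)
  then show ?case by simp
next
  case (Suc j)
  have "card (walks S R (Suc j) a P) = (\<Sum>x\<in>set (filter (R a) S). card ((#) a ` walks S R j x P))"
    unfolding walks_Suc[OF Suc.prems]
    by (rule card_UN_disjoint) (simp_all add: finite_walks, auto simp: walks_def)
  also have "\<dots> = (\<Sum>x\<leftarrow>filter (R a) S. length (filter P (walk_ends S R j x)))"
    using assms(1) Suc.IH by (simp add: sum_list_distinct_conv_sum_set card_image)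
  also have "\<dots> = length (filter P (walk_ends S R (Suc j) a))"
    by (simp add: filter_concat length_concat o_def)
  finally show ?case .
qed

section \<open>The transfer system of colour triples\<close>

definition third_colour :: "nat \<Rightarrow> nat \<Rightarrow> nat" where
  "third_colour a b = 3 - a - b"

lemma third_colour_props:
  "a < 3 \<Longrightarrow> b < 3 \<Longrightarrow> a \<noteq> b \<Longrightarrow> third_colour a b < 3 \<and> third_colour a b \<noteq> a \<and> third_colour a b \<noteq> b"
  unfolding third_colour_def by arith

lemma third_colour_unique:
  "a < 3 \<Longrightarrow> b < 3 \<Longrightarrow> x < 3 \<Longrightarrow> a \<noteq> b \<Longrightarrow> x \<noteq> a \<Longrightarrow> x \<noteq> b \<Longrightarrow> x = third_colour a b"
  unfolding third_colour_def by arith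

lemma third_colour_cases:
  "a < 3 \<Longrightarrow> b < 3 \<Longrightarrow> x < 3 \<Longrightarrow> a \<noteq> b \<Longrightarrow> x = a \<or> x = b \<or> x = third_colour a b"
  unfolding third_colour_def by arith

type_synonym triple = "nat \<times> nat \<times> nat"

text \<open>A triple is a column (c_j, c_{j+k}, c_{j+2k}) of outer edge colours, c_i being the colour of
  u_i u_{i+1}. Consecutive columns are compatible iff the colouring is proper at u_{j+1},
  u_{j+k+1}, u_{j+2k+1} and the spokes there, which meet one inner triangle, get distinct
  colours. From the last column to the first the outer cycle moves on to the next arc, hence the
  rotation in \<open>closes\<close>; its second conjunct is the normalisation c_{3k-1} = 1.\<close>

fun compatible :: "triple \<Rightarrow> triple \<Rightarrow> bool" where
  "compatible (a1, a2, a3) (b1, b2, b3) \<longleftrightarrow>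
     a1 \<noteq> b1 \<and> a2 \<noteq> b2 \<and> a3 \<noteq> b3 \<and>
     distinct [third_colour a1 b1, third_colour a2 b2, third_colour a3 b3]"

fun rotate_triple :: "triple \<Rightarrow> triple" where
  "rotate_triple (x, y, z) = (z, x, y)"

definition closes :: "triple \<Rightarrow> triple \<Rightarrow> bool" where
  "closes a b \<longleftrightarrow> compatible (rotate_triple b) a \<and> snd (snd b) = 1"

definition triples :: "triple list" where
  "triples = [(x, y, z). x \<leftarrow> [0, 1, 2], y \<leftarrow> [0, 1, 2], z \<leftarrow> [0, 1, 2]]"

lemma triples_eq:
  "triples = [(0,0,0),(0,0,1),(0,0,2),(0,1,0),(0,1,1),(0,1,2),(0,2,0),(0,2,1),(0,2,2),
    (1,0,0),(1,0,1),(1,0,2),(1,1,0),(1,1,1),(1,1,2),(1,2,0),(1,2,1),(1,2,2),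
    (2,0,0),(2,0,1),(2,0,2),(2,1,0),(2,1,1),(2,1,2),(2,2,0),(2,2,1),(2,2,2)]"
  by (simp add: triples_def)

lemma distinct_triples: "distinct triples"
  by (simp add: triples_eq)

lemma mem_triples_iff: "(x, y, z) \<in> set triples \<longleftrightarrow> x < 3 \<and> y < 3 \<and> z < 3"
proof -
  have triples: "set triples = {0, 1, 2} \<times> {0, 1, 2} \<times> {0, 1, 2}"
    by (auto simp: triples_def)
  have "\<And>x :: nat. x \<in> {0, 1, 2} \<longleftrightarrow> x < 3"
    by auto
  then show ?thesis
    by (simp only: triples mem_Times_iff fst_conv snd_conv)
qed

lemma compatible_successors:
  "filter (compatible (0,0,0)) triples = []"
  "filter (compatible (0,0,1)) triples = [(1,2,2),(2,1,2)]"
  "filter (compatible (0,0,2)) triples = [(1,2,1),(2,1,1)]"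
  "filter (compatible (0,1,0)) triples = [(1,2,2),(2,2,1)]"
  "filter (compatible (0,1,1)) triples = [(2,0,2),(2,2,0)]"
  "filter (compatible (0,1,2)) triples = [(1,2,0),(2,0,1)]"
  "filter (compatible (0,2,0)) triples = [(1,1,2),(2,1,1)]"
  "filter (compatible (0,2,1)) triples = [(1,0,2),(2,1,0)]"
  "filter (compatible (0,2,2)) triples = [(1,0,1),(1,1,0)]"
  "filter (compatible (1,0,0)) triples = [(2,1,2),(2,2,1)]"
  "filter (compatible (1,0,1)) triples = [(0,2,2),(2,2,0)]"
  "filter (compatible (1,0,2)) triples = [(0,2,1),(2,1,0)]"
  "filter (compatible (1,1,0)) triples = [(0,2,2),(2,0,2)]"
  "filter (compatible (1,1,1)) triples = []"
  "filter (compatible (1,1,2)) triples = [(0,2,0),(2,0,0)]"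
  "filter (compatible (1,2,0)) triples = [(0,1,2),(2,0,1)]"
  "filter (compatible (1,2,1)) triples = [(0,0,2),(2,0,0)]"
  "filter (compatible (1,2,2)) triples = [(0,0,1),(0,1,0)]"
  "filter (compatible (2,0,0)) triples = [(1,1,2),(1,2,1)]"
  "filter (compatible (2,0,1)) triples = [(0,1,2),(1,2,0)]"
  "filter (compatible (2,0,2)) triples = [(0,1,1),(1,1,0)]"
  "filter (compatible (2,1,0)) triples = [(0,2,1),(1,0,2)]"
  "filter (compatible (2,1,1)) triples = [(0,0,2),(0,2,0)]"
  "filter (compatible (2,1,2)) triples = [(0,0,1),(1,0,0)]"
  "filter (compatible (2,2,0)) triples = [(0,1,1),(1,0,1)]"
  "filter (compatible (2,2,1)) triples = [(0,1,0),(1,0,0)]"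
  "filter (compatible (2,2,2)) triples = []"
  by (simp_all add: triples_eq third_colour_def)

text \<open>The simplifier rewrites the colour 1 to \<open>Suc 0\<close>, so the table is used in that form.\<close>

lemmas compatible_successors_Suc_0 [simp] = compatible_successors[unfolded One_nat_def]

abbreviation column_walk_ends :: "nat \<Rightarrow> triple \<Rightarrow> triple list" where
  "column_walk_ends \<equiv> walk_ends triples compatible"

text \<open>The transfer matrix T of \<open>compatible\<close> satisfies T^5 + 4 T = 5 T^3, checked row by row by
  expanding all walks of length at most 5.\<close>

lemma transfer_matrix_identity:
  assumes "a \<in> set triples"
  shows "(\<Sum>b\<leftarrow>column_walk_ends 5 a. h b) + 4 * (\<Sum>b\<leftarrow>column_walk_ends 1 a. h b)
           = 5 * (\<Sum>b\<leftarrow>column_walk_ends 3 a. h b :: int)"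
  using assms[unfolded triples_eq] by auto

lemma transfer_recurrence:
  assumes "a \<in> set triples"
  shows "(\<Sum>b\<leftarrow>column_walk_ends (j + 5) a. h b) + 4 * (\<Sum>b\<leftarrow>column_walk_ends (j + 1) a. h b)
           = 5 * (\<Sum>b\<leftarrow>column_walk_ends (j + 3) a. h b :: int)"
  using transfer_matrix_identity[OF assms, of "\<lambda>x. \<Sum>b\<leftarrow>column_walk_ends j x. h b"]
  by (simp only: add.commute[of j] sum_list_walk_ends_add)

lemma starting_triples:
  "filter (\<lambda>a. fst a = 0) triples = [(0,0,0),(0,0,1),(0,0,2),(0,1,0),(0,1,1),(0,1,2),(0,2,0),(0,2,1),(0,2,2)]"
  by (simp add: triples_eq)

definition closed_walk_count :: "nat \<Rightarrow> int" where
  "closed_walk_count j =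
     (\<Sum>a\<leftarrow>filter (\<lambda>a. fst a = 0) triples. \<Sum>b\<leftarrow>column_walk_ends j a. of_bool (closes a b))"

lemma closed_walk_count_recurrence:
  "closed_walk_count (j + 5) + 4 * closed_walk_count (j + 1) = 5 * closed_walk_count (j + 3)"
proof -
  let ?S = "\<lambda>m a. \<Sum>b\<leftarrow>column_walk_ends (j + m) a. of_bool (closes a b) :: int"
  let ?starts = "filter (\<lambda>a. fst a = 0) triples"
  have "(\<Sum>a\<leftarrow>?starts. ?S 5 a + 4 * ?S 1 a) = (\<Sum>a\<leftarrow>?starts. 5 * ?S 3 a)"
    using transfer_recurrence by (intro arg_cong[where f = sum_list] map_cong) (simp_all del: walk_ends.simps)
  then show ?thesis
    by (simp only: closed_walk_count_def sum_list_addf sum_list_const_mult)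
qed

lemma closed_walk_count_initial:
  "closed_walk_count 0 = 1" "closed_walk_count 1 = 4" "closed_walk_count 2 = 3"
  "closed_walk_count 3 = 20" "closed_walk_count 4 = 11"
  by (simp_all add: closed_walk_count_def starting_triples closes_def third_colour_def)

definition factorisation_number :: "nat \<Rightarrow> nat" where
  "factorisation_number k = (if odd k then jacobsthal k else 4 * jacobsthal k)"

lemma jacobsthal_recurrence2: "jacobsthal (i + 4) + 4 * jacobsthal i = 5 * jacobsthal (i + 2)"
proof -
  have "jacobsthal (i + 4) = jacobsthal (i + 3) + 2 * jacobsthal (i + 2)"
    and "jacobsthal (i + 3) = jacobsthal (i + 2) + 2 * jacobsthal (i + 1)"
    and "jacobsthal (i + 2) = jacobsthal (i + 1) + 2 * jacobsthal i"
    by (simp_all add: numeral_eq_Suc)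
  then show ?thesis by linarith
qed

lemma factorisation_number_recurrence:
  "factorisation_number (i + 4) + 4 * factorisation_number i = 5 * factorisation_number (i + 2)"
  using jacobsthal_recurrence2[of i] by (simp add: factorisation_number_def)

lemma factorisation_number_initial:
  "factorisation_number 1 = 1" "factorisation_number 2 = 4" "factorisation_number 3 = 3"
  "factorisation_number 4 = 20" "factorisation_number 5 = 11"
proof -
  have "jacobsthal 1 = 1" "jacobsthal 2 = 1" "jacobsthal 3 = 3" "jacobsthal 4 = 5" "jacobsthal 5 = 11"
    by (simp_all add: numeral_eq_Suc)
  then show "factorisation_number 1 = 1" "factorisation_number 2 = 4" "factorisation_number 3 = 3"
    "factorisation_number 4 = 20" "factorisation_number 5 = 11"
    by (simp_all add: factorisation_number_def)
qed

lemma closed_walk_count_eq: "closed_walk_count j = int (factorisation_number (Suc j))"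
proof (induction j rule: less_induct)
  case (less j)
  show ?case
  proof (cases "j < 5")
    case True
    then consider "j = 0" | "j = 1" | "j = 2" | "j = 3" | "j = 4" by linarith
    then show ?thesis
      using closed_walk_count_initial factorisation_number_initial
      by cases (simp_all add: eval_nat_numeral)
  next
    case False
    then obtain i where j: "j = i + 5" by (metis add.commute le_Suc_ex not_less)
    have IH: "closed_walk_count (i + 3) = int (factorisation_number (i + 4))"
      "closed_walk_count (i + 1) = int (factorisation_number (i + 2))"
      using less[of "i + 3"] less[of "i + 1"] j by (simp_all add: add.commute)
    have "factorisation_number (i + 6) + 4 * factorisation_number (i + 2)
            = 5 * factorisation_number (i + 4)"
      using factorisation_number_recurrence[of "i + 2"]
      by (simp only: add.assoc numeral_plus_numeral semiring_norm)
    then have "int (factorisation_number (i + 6)) + 4 * int (factorisation_number (i + 2))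
                 = 5 * int (factorisation_number (i + 4))"
      by (metis of_nat_add of_nat_mult of_nat_numeral)
    with IH have "closed_walk_count (i + 5) = int (factorisation_number (i + 6))"
      using closed_walk_count_recurrence[of i] by linarith
    then show ?thesis
      using j by (simp add: eval_nat_numeral)
  qed
qed

section \<open>Colourings of the outer cycle and column sequences\<close>

definition cycle_pred :: "nat \<Rightarrow> nat \<Rightarrow> nat" where
  "cycle_pred n i = (i + n - 1) mod n"

lemma mod_add_neq_self:
  assumes "(x :: nat) < n" "0 < d" "d < n"
  shows "(x + d) mod n \<noteq> x"
proof (cases "x + d < n")
  case False
  then have "(x + d) mod n = x + d - n"
    using assms by (simp add: le_mod_geq)
  then show ?thesis
    using False assms by arith
qed (use assms in simp)

lemma cycle_pred_less: "0 < n \<Longrightarrow> cycle_pred n i < n"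
  by (simp add: cycle_pred_def)

lemma Suc_cycle_pred: "i < n \<Longrightarrow> Suc (cycle_pred n i) mod n = i"
proof -
  assume i: "i < n"
  have "Suc (cycle_pred n i) mod n = Suc (i + n - 1) mod n"
    by (simp add: cycle_pred_def mod_Suc_eq)
  also have "Suc (i + n - 1) = i + n"
    using i by simp
  finally show ?thesis
    using i by simp
qed

lemma cycle_pred_Suc: "i < n \<Longrightarrow> cycle_pred n (Suc i mod n) = i"
proof -
  assume i: "i < n"
  have "cycle_pred n (Suc i mod n) = (Suc i mod n + (n - 1)) mod n"
    using i by (simp add: cycle_pred_def)
  also have "\<dots> = (Suc i + (n - 1)) mod n"
    by (simp add: mod_add_left_eq)
  also have "Suc i + (n - 1) = i + n"
    using i by simp
  finally show ?thesis
    using i by simp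
qed

lemma cycle_pred_neq: "2 \<le> n \<Longrightarrow> i < n \<Longrightarrow> cycle_pred n i \<noteq> i"
  using mod_add_neq_self[of i n "n - 1"] by (simp add: cycle_pred_def)

definition spoke_colour :: "nat \<Rightarrow> (nat \<Rightarrow> nat) \<Rightarrow> nat \<Rightarrow> nat" where
  "spoke_colour k c i = third_colour (c (cycle_pred (3 * k) i)) (c i)"

definition proper_cycle_colouring :: "nat \<Rightarrow> (nat \<Rightarrow> nat) \<Rightarrow> bool" where
  "proper_cycle_colouring n c \<longleftrightarrow> (\<forall>i<n. c i \<noteq> c (Suc i mod n))"

definition distinct_triangle_spokes :: "nat \<Rightarrow> (nat \<Rightarrow> nat) \<Rightarrow> bool" where
  "distinct_triangle_spokes k c \<longleftrightarrow>
     (\<forall>j<k. distinct [spoke_colour k c j, spoke_colour k c (j + k), spoke_colour k c (j + 2 * k)])"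

text \<open>\<open>c i\<close> is the colour of the outer edge u_i u_{i+1}; the two outer edges at u_0 are coloured
  0 and 1.\<close>

definition normal_colourings :: "nat \<Rightarrow> (nat \<Rightarrow> nat) set" where
  "normal_colourings k =
     {c \<in> {..<3 * k} \<rightarrow>\<^sub>E {..<3}. c 0 = 0 \<and> c (3 * k - 1) = 1 \<and>
        proper_cycle_colouring (3 * k) c \<and> distinct_triangle_spokes k c}"

definition columns :: "nat \<Rightarrow> (nat \<Rightarrow> nat) \<Rightarrow> triple list" where
  "columns k c = map (\<lambda>j. (c j, c (j + k), c (j + 2 * k))) [0..<k]"

definition column_sequences :: "nat \<Rightarrow> triple list set" where
  "column_sequences k =
     {T. length T = k \<and> set T \<subseteq> set triples \<and> successively compatible T \<and>
         fst (hd T) = 0 \<and> closes (hd T) (last T)}"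

lemma spoke_colour_Suc:
  "Suc i < 3 * k \<Longrightarrow> spoke_colour k c (Suc i) = third_colour (c i) (c (Suc i))"
  by (simp add: spoke_colour_def cycle_pred_def)

lemma spoke_colour_0: "1 \<le> k \<Longrightarrow> spoke_colour k c 0 = third_colour (c (3 * k - 1)) (c 0)"
  by (simp add: spoke_colour_def cycle_pred_def)

lemma length_columns [simp]: "length (columns k c) = k"
  by (simp add: columns_def)

lemma nth_columns: "j < k \<Longrightarrow> columns k c ! j = (c j, c (j + k), c (j + 2 * k))"
  by (simp add: columns_def)

lemma hd_columns: "1 \<le> k \<Longrightarrow> hd (columns k c) = (c 0, c k, c (2 * k))"
  by (simp add: hd_conv_nth columns_def)

lemma last_columns:
  assumes "1 \<le> k"
  shows "last (columns k c) = (c (k - 1), c (2 * k - 1), c (3 * k - 1))"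
proof -
  have shift: "k - 1 + k = 2 * k - 1" "k - 1 + 2 * k = 3 * k - 1"
    using assms by simp_all
  have "last (columns k c) = columns k c ! (k - 1)"
    using assms by (metis last_conv_nth length_columns list.size(3) not_one_le_zero)
  also have "\<dots> = (c (k - 1), c (k - 1 + k), c (k - 1 + 2 * k))"
    using assms by (simp add: nth_columns)
  finally show ?thesis
    by (simp only: shift)
qed

lemma compatible_columns:
  assumes "Suc j < k"
  shows "compatible (columns k c ! j) (columns k c ! Suc j) \<longleftrightarrow>
           c j \<noteq> c (Suc j) \<and> c (j + k) \<noteq> c (Suc j + k) \<and> c (j + 2 * k) \<noteq> c (Suc j + 2 * k) \<and>
           distinct [spoke_colour k c (Suc j), spoke_colour k c (Suc j + k),
                     spoke_colour k c (Suc j + 2 * k)]"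
  using assms spoke_colour_Suc[of j k c] spoke_colour_Suc[of "j + k" k c]
    spoke_colour_Suc[of "j + 2 * k" k c]
  by (simp add: nth_columns)

lemma compatible_wraparound:
  assumes "1 \<le> k"
  shows "compatible (rotate_triple (last (columns k c))) (hd (columns k c)) \<longleftrightarrow>
           c (3 * k - 1) \<noteq> c 0 \<and> c (k - 1) \<noteq> c k \<and> c (2 * k - 1) \<noteq> c (2 * k) \<and>
           distinct [spoke_colour k c 0, spoke_colour k c k, spoke_colour k c (2 * k)]"
proof -
  have "spoke_colour k c k = third_colour (c (k - 1)) (c k)"
    and "spoke_colour k c (2 * k) = third_colour (c (2 * k - 1)) (c (2 * k))"
    using assms spoke_colour_Suc[of "k - 1" k c] spoke_colour_Suc[of "2 * k - 1" k c] by simp_all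
  then show ?thesis
    using assms by (simp add: hd_columns last_columns spoke_colour_0)
qed

lemma all_less_three_times:
  "(\<forall>i<3 * k. P i) \<longleftrightarrow> (\<forall>j<(k::nat). P j \<and> P (j + k) \<and> P (j + 2 * k))"
proof
  assume all: "\<forall>j<k. P j \<and> P (j + k) \<and> P (j + 2 * k)"
  show "\<forall>i<3 * k. P i"
  proof (intro allI impI)
    fix i assume "i < 3 * k"
    then consider "i < k" | "k \<le> i" "i < 2 * k" | "2 * k \<le> i" "i - 2 * k < k"
      by linarith
    then show "P i"
    proof cases
      case 2
      then show ?thesis using all[rule_format, of "i - k"] by simp
    next
      case 3
      then show ?thesis using all[rule_format, of "i - 2 * k"] by simp
    qed (use all in blast)
  qed
qed auto

lemma all_less_split_last_first:
  assumes "1 \<le> k"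
  shows "(\<forall>j<k. A j) \<and> (\<forall>j<k. B j) \<longleftrightarrow>
           (\<forall>j. Suc j < k \<longrightarrow> A j \<and> B (Suc j)) \<and> A (k - 1) \<and> B 0"
proof
  assume "(\<forall>j. Suc j < k \<longrightarrow> A j \<and> B (Suc j)) \<and> A (k - 1) \<and> B 0"
  then show "(\<forall>j<k. A j) \<and> (\<forall>j<k. B j)"
    by (metis Suc_lessI diff_Suc_1 not0_implies_Suc)
qed (use assms in auto)

lemma proper_colouring_iff_columns:
  assumes "1 \<le> k"
  shows "proper_cycle_colouring (3 * k) c \<and> distinct_triangle_spokes k c \<longleftrightarrow>
           successively compatible (columns k c) \<and>
           compatible (rotate_triple (last (columns k c))) (hd (columns k c))"
proof -
  define A where "A j \<longleftrightarrow> c j \<noteq> c (Suc j mod (3 * k)) \<and> c (j + k) \<noteq> c (Suc (j + k) mod (3 * k)) \<and>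
                           c (j + 2 * k) \<noteq> c (Suc (j + 2 * k) mod (3 * k))" for j
  define B where "B j \<longleftrightarrow>
    distinct [spoke_colour k c j, spoke_colour k c (j + k), spoke_colour k c (j + 2 * k)]" for j
  have "proper_cycle_colouring (3 * k) c \<longleftrightarrow> (\<forall>j<k. A j)"
    unfolding proper_cycle_colouring_def A_def by (rule all_less_three_times)
  moreover have "distinct_triangle_spokes k c \<longleftrightarrow> (\<forall>j<k. B j)"
    by (simp add: distinct_triangle_spokes_def B_def)
  moreover have "successively compatible (columns k c) \<longleftrightarrow> (\<forall>j. Suc j < k \<longrightarrow> A j \<and> B (Suc j))"
    by (auto simp: successively_conv_nth compatible_columns A_def B_def ac_simps)
  moreover have "compatible (rotate_triple (last (columns k c))) (hd (columns k c)) \<longleftrightarrow> A (k - 1) \<and> B 0"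
  proof -
    have "Suc (k - 1) mod (3 * k) = k" "Suc (k - 1 + k) mod (3 * k) = 2 * k"
      "Suc (k - 1 + 2 * k) mod (3 * k) = 0" "k - 1 + k = 2 * k - 1" "k - 1 + 2 * k = 3 * k - 1"
      using assms by simp_all
    then show ?thesis
      unfolding compatible_wraparound[OF assms] A_def B_def by auto
  qed
  ultimately show ?thesis
    using all_less_split_last_first[OF assms] by simp
qed

fun triple_nth :: "nat \<Rightarrow> triple \<Rightarrow> nat" where
  "triple_nth m (x, y, z) = (if m = 0 then x else if m = 1 then y else z)"

lemma triple_nth_column:
  assumes "m < 3"
  shows "triple_nth m (c j, c (j + k), c (j + 2 * k)) = c (j + m * k)"
proof -
  from assms consider "m = 0" | "m = 1" | "m = 2" by linarith
  then show ?thesis by cases (simp_all add: mult_2)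
qed

definition colouring_of_columns :: "nat \<Rightarrow> triple list \<Rightarrow> nat \<Rightarrow> nat" where
  "colouring_of_columns k T =
     (\<lambda>i. if i < 3 * k then triple_nth (i div k) (T ! (i mod k)) else undefined)"

lemma colouring_of_columns_columns:
  assumes "c \<in> {..<3 * k} \<rightarrow>\<^sub>E {..<3}"
  shows "colouring_of_columns k (columns k c) = c"
proof
  fix i
  show "colouring_of_columns k (columns k c) i = c i"
  proof (cases "i < 3 * k")
    case True
    then have "i div k < 3"
      by (rule less_mult_imp_div_less)
    have "i mod k < k"
      using True by simp
    have "colouring_of_columns k (columns k c) i = triple_nth (i div k) (columns k c ! (i mod k))"
      using True by (simp add: colouring_of_columns_def)
    also have "\<dots> = c (i mod k + i div k * k)"
      unfolding nth_columns[OF \<open>i mod k < k\<close>] by (rule triple_nth_column) fact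
    finally show ?thesis
      by simp
  next
    case False
    then have "c i = undefined"
      by (intro PiE_arb[OF assms]) simp
    with False show ?thesis
      by (simp add: colouring_of_columns_def)
  qed
qed

lemma columns_colouring_of_columns:
  assumes "length T = k"
  shows "columns k (colouring_of_columns k T) = T"
proof (rule nth_equalityI)
  fix j assume "j < length (columns k (colouring_of_columns k T))"
  then have j: "j < k" by simp
  obtain x y z where "T ! j = (x, y, z)" by (cases "T ! j")
  moreover have "(j + k) div k = 1" "(j + k) mod k = j" "(j + 2 * k) div k = 2" "(j + 2 * k) mod k = j"
    using j by (simp_all add: div_add_self2)
  ultimately show "columns k (colouring_of_columns k T) ! j = T ! j"
    using j by (simp add: nth_columns colouring_of_columns_def)
qed (simp add: assms)

lemma columns_in_column_sequences:
  assumes "1 \<le> k" and c: "c \<in> normal_colourings k"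
  shows "columns k c \<in> column_sequences k"
proof -
  have c3: "c \<in> {..<3 * k} \<rightarrow>\<^sub>E {..<3}" "c 0 = 0" "c (3 * k - 1) = 1"
    using c by (simp_all add: normal_colourings_def)
  have "set (columns k c) \<subseteq> set triples"
    using PiE_mem[OF c3(1)] by (auto simp: columns_def mem_triples_iff)
  moreover have "successively compatible (columns k c) \<and>
                   compatible (rotate_triple (last (columns k c))) (hd (columns k c))"
    using c proper_colouring_iff_columns[OF assms(1)] by (simp add: normal_colourings_def)
  ultimately show ?thesis
    using assms(1) c3 by (simp add: column_sequences_def closes_def hd_columns last_columns)
qed

lemma colouring_of_columns_in_normal_colourings:
  assumes "1 \<le> k" and T: "T \<in> column_sequences k"
  shows "colouring_of_columns k T \<in> normal_colourings k"
proof -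
  let ?c = "colouring_of_columns k T"
  have len: "length T = k" and "set T \<subseteq> set triples"
    using T by (simp_all add: column_sequences_def)
  then have "\<And>j m. j < k \<Longrightarrow> m < 3 \<Longrightarrow> triple_nth m (T ! j) < 3"
    by (metis (no_types, lifting) in_mono nth_mem mem_triples_iff triple_nth.simps prod_cases3)
  then have PiE: "?c \<in> {..<3 * k} \<rightarrow>\<^sub>E {..<3}"
    by (intro PiE_I) (auto simp: colouring_of_columns_def less_mult_imp_div_less)
  have cols: "columns k ?c = T"
    by (rule columns_colouring_of_columns[OF len])
  have "successively compatible (columns k ?c)"
    and "compatible (rotate_triple (last (columns k ?c))) (hd (columns k ?c))"
    and "fst (hd (columns k ?c)) = 0" and "snd (snd (last (columns k ?c))) = 1"
    using T by (simp_all add: cols column_sequences_def closes_def)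
  then have "?c 0 = 0 \<and> ?c (3 * k - 1) = 1 \<and>
               proper_cycle_colouring (3 * k) ?c \<and> distinct_triangle_spokes k ?c"
    using assms(1) by (simp add: proper_colouring_iff_columns hd_columns last_columns)
  with PiE show ?thesis
    by (simp add: normal_colourings_def)
qed

lemma bij_betw_columns:
  assumes "1 \<le> k"
  shows "bij_betw (columns k) (normal_colourings k) (column_sequences k)"
proof (rule bij_betw_byWitness[where f' = "colouring_of_columns k"])
  show "\<forall>c\<in>normal_colourings k. colouring_of_columns k (columns k c) = c"
    by (simp add: normal_colourings_def colouring_of_columns_columns)
  show "\<forall>T\<in>column_sequences k. columns k (colouring_of_columns k T) = T"
    by (simp add: column_sequences_def columns_colouring_of_columns)
  show "columns k ` normal_colourings k \<subseteq> column_sequences k"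
    using columns_in_column_sequences[OF assms] by blast
  show "colouring_of_columns k ` column_sequences k \<subseteq> normal_colourings k"
    using colouring_of_columns_in_normal_colourings[OF assms] by blast
qed

lemma int_length_filter: "int (length (filter P xs)) = (\<Sum>x\<leftarrow>xs. of_bool (P x))"
  by (induction xs) simp_all

lemma card_column_sequences: "int (card (column_sequences (Suc j))) = closed_walk_count j"
proof -
  let ?starts = "filter (\<lambda>a. fst a = 0) triples"
  have "column_sequences (Suc j) = (\<Union>a\<in>set ?starts. walks triples compatible j a (closes a))"
    by (auto simp: column_sequences_def walks_def) (metis hd_in_set list.size(3) nat.distinct(1) subsetD)
  then have "card (column_sequences (Suc j)) =
               (\<Sum>a\<in>set ?starts. card (walks triples compatible j a (closes a)))"
    by (simp only:) (rule card_UN_disjoint, simp_all add: finite_walks, auto simp: walks_def)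
  also have "\<dots> = (\<Sum>a\<leftarrow>?starts. length (filter (closes a) (column_walk_ends j a)))"
    by (simp add: card_walks distinct_triples sum_list_distinct_conv_sum_set)
  finally show ?thesis
    by (simp add: closed_walk_count_def int_length_filter o_def flip: sum_list_of_nat)
qed

section \<open>One-factorisations and 3-edge-colourings\<close>

definition factor_of :: "'a set set set \<Rightarrow> 'a set \<Rightarrow> 'a set set" where
  "factor_of F e = (THE M. M \<in> F \<and> e \<in> M)"

lemma one_factorisationD:
  assumes "one_factorisation V E F"
  shows "\<Union>F = E" "disjoint F" "\<And>M. M \<in> F \<Longrightarrow> perfect_matching V E M"
  using assms unfolding one_factorisation_def partition_on_def by blast+

lemma factor_of_eq:
  assumes F: "one_factorisation V E F" and "M \<in> F" "e \<in> M"
  shows "factor_of F e = M"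
  unfolding factor_of_def
proof (rule the_equality)
  show "\<And>M'. M' \<in> F \<and> e \<in> M' \<Longrightarrow> M' = M"
    using one_factorisationD(2)[OF F] assms(2,3) by (auto simp: disjoint_def)
qed (use assms in blast)

lemma factor_of_mem:
  assumes F: "one_factorisation V E F" and "e \<in> E"
  shows "factor_of F e \<in> F" "e \<in> factor_of F e"
proof -
  obtain M where "M \<in> F" "e \<in> M"
    using one_factorisationD(1)[OF F] assms(2) by blast
  then show "factor_of F e \<in> F" "e \<in> factor_of F e"
    using factor_of_eq[OF F] by simp_all
qed

lemma factor_eq_Collect:
  assumes F: "one_factorisation V E F" and M: "M \<in> F"
  shows "M = {e \<in> E. factor_of F e = M}"
  using one_factorisationD(1)[OF F] factor_of_eq[OF F M] factor_of_mem[OF F] M by blast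

lemma factor_of_neq:
  assumes F: "one_factorisation V E F" and "x \<in> V" "e \<in> E" "e' \<in> E" "x \<in> e" "x \<in> e'" "e \<noteq> e'"
  shows "factor_of F e \<noteq> factor_of F e'"
proof
  assume eq: "factor_of F e = factor_of F e'"
  have "perfect_matching V E (factor_of F e)"
    using one_factorisationD(3)[OF F] factor_of_mem[OF F \<open>e \<in> E\<close>] by blast
  then show False
    using assms eq factor_of_mem[OF F] unfolding perfect_matching_def by metis
qed

lemma factors_at_vertex:
  assumes F: "one_factorisation V E F" and "x \<in> V" and E: "e1 \<in> E" "e2 \<in> E" "e3 \<in> E"
    and edges_at_x: "\<forall>e\<in>E. x \<in> e \<longleftrightarrow> e = e1 \<or> e = e2 \<or> e = e3"
  shows "F = {factor_of F e1, factor_of F e2, factor_of F e3}"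
proof (intro equalityI subsetI)
  fix M assume M: "M \<in> F"
  then obtain e where e: "e \<in> M" "x \<in> e"
    using one_factorisationD(3)[OF F M] \<open>x \<in> V\<close> unfolding perfect_matching_def by blast
  then have "e \<in> E"
    using one_factorisationD(1)[OF F] M by blast
  then have "e = e1 \<or> e = e2 \<or> e = e3"
    using bspec[OF edges_at_x] e(2) by simp
  moreover have "factor_of F e = M"
    by (rule factor_of_eq[OF F M e(1)])
  ultimately show "M \<in> {factor_of F e1, factor_of F e2, factor_of F e3}"
    by blast
next
  fix M assume "M \<in> {factor_of F e1, factor_of F e2, factor_of F e3}"
  then show "M \<in> F"
    using factor_of_mem(1)[OF F] E by blast
qed

lemma unique_edge_of_colour:
  assumes edges_at_x: "\<forall>e\<in>E. x \<in> e \<longleftrightarrow> e = e1 \<or> e = e2 \<or> e = e3"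
    and E: "e1 \<in> E" "e2 \<in> E" "e3 \<in> E"
    and distinct: "distinct [f e1, f e2, f e3]"
    and less: "f e1 < 3" "f e2 < 3" "f e3 < (3 :: nat)" and a: "a < 3"
  shows "\<exists>!e. e \<in> {e \<in> E. f e = a} \<and> x \<in> e"
proof -
  have "f e3 = third_colour (f e1) (f e2)"
    using third_colour_unique less distinct by simp
  then have "a = f e1 \<or> a = f e2 \<or> a = f e3"
    using third_colour_cases[of "f e1" "f e2" a] less distinct a by simp
  moreover have "x \<in> e1" "x \<in> e2" "x \<in> e3"
    using bspec[OF edges_at_x E(1)] bspec[OF edges_at_x E(2)] bspec[OF edges_at_x E(3)] by simp_all
  ultimately have "\<exists>e. e \<in> {e \<in> E. f e = a} \<and> x \<in> e"
    using E by blast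
  then show ?thesis
  proof (rule ex_ex1I)
    fix e e' assume e: "e \<in> {e \<in> E. f e = a} \<and> x \<in> e" and e': "e' \<in> {e \<in> E. f e = a} \<and> x \<in> e'"
    then have "e = e1 \<or> e = e2 \<or> e = e3" "e' = e1 \<or> e' = e2 \<or> e' = e3"
      using bspec[OF edges_at_x, of e] bspec[OF edges_at_x, of e'] by simp_all
    then show "e = e'"
      using e e' distinct by auto
  qed
qed

section \<open>The generalised Petersen graph GP(3k, k)\<close>

definition outer_edge :: "nat \<Rightarrow> nat \<Rightarrow> (bool \<times> nat) set" where
  "outer_edge k i = {(False, i), (False, Suc i mod (3 * k))}"

definition spoke_edge :: "nat \<Rightarrow> (bool \<times> nat) set" where
  "spoke_edge i = {(False, i), (True, i)}"

definition inner_edge :: "nat \<Rightarrow> nat \<Rightarrow> (bool \<times> nat) set" where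
  "inner_edge k i = {(True, i), (True, (i + k) mod (3 * k))}"

text \<open>\<open>triangle_pred k i\<close> is the index i - k of the third vertex of the inner triangle through
  the edge v_i v_{i+k}.\<close>

definition triangle_pred :: "nat \<Rightarrow> nat \<Rightarrow> nat" where
  "triangle_pred k i = (i + 2 * k) mod (3 * k)"

text \<open>The 3-edge-colouring induced by an outer colouring c: a spoke gets the colour missing at
  its outer end, an inner edge the colour of the spoke at the opposite vertex of its
  triangle.\<close>

definition edge_colour :: "nat \<Rightarrow> (nat \<Rightarrow> nat) \<Rightarrow> (bool \<times> nat) set \<Rightarrow> nat" where
  "edge_colour k c e =
     (if \<exists>i<3 * k. e = outer_edge k i then c (THE i. i < 3 * k \<and> e = outer_edge k i)
      else if \<exists>i<3 * k. e = spoke_edge i then spoke_colour k c (THE i. i < 3 * k \<and> e = spoke_edge i)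
      else spoke_colour k c (triangle_pred k (THE i. i < 3 * k \<and> e = inner_edge k i)))"

definition colour_classes :: "nat \<Rightarrow> (nat \<Rightarrow> nat) \<Rightarrow> (bool \<times> nat) set set set" where
  "colour_classes k c = (\<lambda>a. {e \<in> GP_edges (3 * k) k. edge_colour k c e = a}) ` {..<3}"

text \<open>Conversely, the factors of F are numbered by the outer edges at u_0, which undoes the
  renaming of colours.\<close>

definition factor_index :: "nat \<Rightarrow> (bool \<times> nat) set set set \<Rightarrow> (bool \<times> nat) set \<Rightarrow> nat" where
  "factor_index k F e =
     (if factor_of F e = factor_of F (outer_edge k 0) then 0
      else if factor_of F e = factor_of F (outer_edge k (3 * k - 1)) then 1 else 2)"

definition outer_colouring :: "nat \<Rightarrow> (bool \<times> nat) set set set \<Rightarrow> nat \<Rightarrow> nat" where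
  "outer_colouring k F = (\<lambda>i. if i < 3 * k then factor_index k F (outer_edge k i) else undefined)"

locale GP3k =
  fixes k :: nat
  assumes k_pos: "1 \<le> k"
begin

abbreviation "n \<equiv> 3 * k"
abbreviation "E \<equiv> GP_edges (3 * k) k"
abbreviation "V \<equiv> GP_verts (3 * k)"

lemma GP_edges_eq: "E = outer_edge k ` {..<n} \<union> spoke_edge ` {..<n} \<union> inner_edge k ` {..<n}"
  unfolding GP_edges_def outer_edge_def spoke_edge_def inner_edge_def by auto

lemma outer_edge_in: "i < n \<Longrightarrow> outer_edge k i \<in> E"
  and spoke_edge_in: "i < n \<Longrightarrow> spoke_edge i \<in> E"
  and inner_edge_in: "i < n \<Longrightarrow> inner_edge k i \<in> E"
  unfolding GP_edges_eq by blast+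

lemma vertex_in: "i < n \<Longrightarrow> (b, i) \<in> V"
  by (simp add: GP_verts_def)

lemma mod_add_k_less: "(i + k) mod n < n"
  using k_pos by simp

lemma triangle_pred_less: "triangle_pred k i < n"
  using k_pos by (simp add: triangle_pred_def)

lemma triangle_pred_add: "i < n \<Longrightarrow> (triangle_pred k i + k) mod n = i"
  by (simp add: triangle_pred_def mod_add_left_eq add.assoc)

lemma triangle_pred_mod_add: "i < n \<Longrightarrow> triangle_pred k ((i + k) mod n) = i"
  by (simp add: triangle_pred_def mod_add_left_eq add.assoc)

lemma triangle_pred_triangle_pred: "triangle_pred k (triangle_pred k i) = (i + k) mod n"
proof -
  have "triangle_pred k (triangle_pred k i) = (i + 2 * k + 2 * k) mod n"
    by (simp add: triangle_pred_def mod_add_left_eq)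
  also have "\<dots> = (i + k + n) mod n"
    by (rule arg_cong[where f = "\<lambda>x. x mod n"]) simp
  also have "\<dots> = (i + k) mod n"
    by (rule mod_add_self2)
  finally show ?thesis .
qed

text \<open>Every inner vertex lies on a triangle v_j v_{j+k} v_{j+2k} with j < k, so rotation-invariant
  properties of these triangles hold at every vertex.\<close>

lemma triangle_rotation:
  assumes "i < n"
    and base: "\<And>j. j < k \<Longrightarrow> P j (j + k) (j + 2 * k)"
    and rotate: "\<And>a b c. P a b c \<Longrightarrow> P b c a"
  shows "P i ((i + k) mod n) (triangle_pred k i)"
proof -
  consider "i < k" | "k \<le> i" "i < 2 * k" | "2 * k \<le> i"
    by linarith
  then show ?thesis
  proof cases
    case 1
    then show ?thesis
      using base[of i] by (simp add: triangle_pred_def)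
  next
    case 2
    define j where "j = i - k"
    have j: "j < k" "i = j + k"
      using 2 by (simp_all add: j_def)
    have "(j + k + k) mod n = j + 2 * k" "triangle_pred k (j + k) = j"
      using j(1) by (simp_all add: triangle_pred_def)
    then show ?thesis
      unfolding j(2) using rotate[OF base[OF j(1)]] by (simp only:)
  next
    case 3
    define j where "j = i - 2 * k"
    have j: "j < k" "i = j + 2 * k"
      using 3 assms(1) by (simp_all add: j_def)
    have "triangle_pred k (j + 2 * k) = (j + k + n) mod n"
      unfolding triangle_pred_def by (rule arg_cong[where f = "\<lambda>x. x mod n"]) simp
    also have "\<dots> = j + k"
      unfolding mod_add_self2 using j(1) by simp
    finally have "(j + 2 * k + k) mod n = j" "triangle_pred k (j + 2 * k) = j + k"
      using j(1) by simp_all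
    then show ?thesis
      unfolding j(2) using rotate[OF rotate[OF base[OF j(1)]]] by (simp only:)
  qed
qed

lemma outer_edge_inj:
  assumes "i < n" "j < n" "outer_edge k i = outer_edge k j"
  shows "i = j"
proof (rule ccontr)
  assume "i \<noteq> j"
  with assms(3) have "i = Suc j mod n" "j = Suc i mod n"
    by (auto simp: outer_edge_def doubleton_eq_iff)
  then have "j = Suc (Suc j mod n) mod n"
    by simp
  then have "(j + 2) mod n = j"
    by (simp add: mod_Suc_eq)
  moreover have "(j + 2) mod n \<noteq> j"
    using assms(2) k_pos by (intro mod_add_neq_self) linarith+
  ultimately show False
    by simp
qed

lemma inner_edge_inj:
  assumes "i < n" "j < n" "inner_edge k i = inner_edge k j"
  shows "i = j"
proof (rule ccontr)
  assume "i \<noteq> j"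
  with assms(3) have "i = (j + k) mod n" "j = (i + k) mod n"
    by (auto simp: inner_edge_def doubleton_eq_iff)
  then have "j = ((j + k) mod n + k) mod n"
    by simp
  then have "(j + 2 * k) mod n = j"
    by (simp add: mod_add_left_eq add.assoc mult_2)
  moreover have "(j + 2 * k) mod n \<noteq> j"
    using assms(2) k_pos by (intro mod_add_neq_self) linarith+
  ultimately show False
    by simp
qed

lemma spoke_edge_inj: "spoke_edge i = spoke_edge j \<Longrightarrow> i = j"
  by (auto simp: spoke_edge_def doubleton_eq_iff)

lemma outer_neq_spoke: "outer_edge k i \<noteq> spoke_edge j"
  and outer_neq_inner: "outer_edge k i \<noteq> inner_edge k j"
  and spoke_neq_inner: "spoke_edge i \<noteq> inner_edge k j"
  by (auto simp: outer_edge_def spoke_edge_def inner_edge_def doubleton_eq_iff)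

lemma edges_at_u:
  assumes i: "i < n"
  shows "\<forall>e\<in>E. (False, i) \<in> e \<longleftrightarrow> e = outer_edge k i \<or> e = outer_edge k (cycle_pred n i) \<or> e = spoke_edge i"
proof -
  have "j = cycle_pred n i" if "j < n" "i = Suc j mod n" for j
    using that cycle_pred_Suc by simp
  then show ?thesis
    unfolding GP_edges_eq
    by (auto simp: outer_edge_def spoke_edge_def inner_edge_def Suc_cycle_pred[OF i])
qed

lemma edges_at_v:
  assumes i: "i < n"
  shows "\<forall>e\<in>E. (True, i) \<in> e \<longleftrightarrow> e = spoke_edge i \<or> e = inner_edge k i \<or> e = inner_edge k (triangle_pred k i)"
proof -
  have "j = triangle_pred k i" if "j < n" "i = (j + k) mod n" for j
    using that triangle_pred_mod_add by simp
  then show ?thesis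
    unfolding GP_edges_eq
    by (auto simp: spoke_edge_def inner_edge_def outer_edge_def triangle_pred_add[OF i])
qed

lemma edge_colour_outer: "i < n \<Longrightarrow> edge_colour k c (outer_edge k i) = c i"
proof -
  assume i: "i < n"
  have the: "(THE j. j < n \<and> outer_edge k i = outer_edge k j) = i"
    by (rule the_equality) (use i outer_edge_inj in auto)
  have outer: "\<exists>j<n. outer_edge k i = outer_edge k j"
    using i by blast
  show ?thesis
    unfolding edge_colour_def by (simp only: outer if_True the)
qed

lemma edge_colour_spoke: "i < n \<Longrightarrow> edge_colour k c (spoke_edge i) = spoke_colour k c i"
proof -
  assume i: "i < n"
  have the: "(THE j. j < n \<and> spoke_edge i = spoke_edge j) = i"
    by (rule the_equality) (use i spoke_edge_inj in auto)
  have not_outer: "\<not> (\<exists>j<n. spoke_edge i = outer_edge k j)"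
    using outer_neq_spoke by metis
  have spoke: "\<exists>j<n. spoke_edge i = spoke_edge j"
    using i by blast
  show ?thesis
    unfolding edge_colour_def by (simp only: not_outer spoke if_False if_True the)
qed

lemma edge_colour_inner: "i < n \<Longrightarrow> edge_colour k c (inner_edge k i) = spoke_colour k c (triangle_pred k i)"
proof -
  assume i: "i < n"
  have the: "(THE j. j < n \<and> inner_edge k i = inner_edge k j) = i"
    by (rule the_equality) (use i inner_edge_inj in auto)
  have not_outer: "\<not> (\<exists>j<n. inner_edge k i = outer_edge k j)"
    and not_spoke: "\<not> (\<exists>j<n. inner_edge k i = spoke_edge j)"
    using outer_neq_inner spoke_neq_inner by metis+
  show ?thesis
    unfolding edge_colour_def by (simp only: not_outer not_spoke if_False the)
qed

context
  fixes c assumes c: "c \<in> normal_colourings k"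
begin

lemma colour_less: "i < n \<Longrightarrow> c i < 3"
  using c by (auto simp: normal_colourings_def)

lemma colour_cycle_pred_neq: "i < n \<Longrightarrow> c (cycle_pred n i) \<noteq> c i"
  using c Suc_cycle_pred[of i n] cycle_pred_less[of n i]
  by (auto simp: normal_colourings_def proper_cycle_colouring_def)

lemma spoke_colour_props:
  "i < n \<Longrightarrow> spoke_colour k c i < 3 \<and> spoke_colour k c i \<noteq> c (cycle_pred n i) \<and> spoke_colour k c i \<noteq> c i"
  unfolding spoke_colour_def using third_colour_props colour_less colour_cycle_pred_neq cycle_pred_less
  by simp

lemma triangle_spokes_distinct:
  assumes "i < n"
  shows "distinct [spoke_colour k c i, spoke_colour k c ((i + k) mod n), spoke_colour k c (triangle_pred k i)]"
  by (rule triangle_rotation[OF assms]) (use c in \<open>auto simp: normal_colourings_def distinct_triangle_spokes_def\<close>)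

lemma edge_colour_less: "e \<in> E \<Longrightarrow> edge_colour k c e < 3"
  unfolding GP_edges_eq
  using colour_less spoke_colour_props triangle_pred_less
  by (auto simp: edge_colour_outer edge_colour_spoke edge_colour_inner)

lemma unique_edge_of_colour_at:
  assumes a: "a < 3" and "x \<in> V"
  shows "\<exists>!e. e \<in> {e \<in> E. edge_colour k c e = a} \<and> x \<in> e"
proof -
  obtain b i where x: "x = (b, i)" and i: "i < n"
    using assms(2) by (cases x) (auto simp: GP_verts_def)
  have pred: "cycle_pred n i < n"
    using i by (simp add: cycle_pred_less)
  show ?thesis
  proof (cases b)
    case False
    show ?thesis
    proof (rule unique_edge_of_colour[OF _ _ _ _ _ _ _ _ a])
      show "\<forall>e\<in>E. x \<in> e \<longleftrightarrow> e = outer_edge k i \<or> e = outer_edge k (cycle_pred n i) \<or> e = spoke_edge i"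
        using edges_at_u[OF i] x False by simp
      show "outer_edge k i \<in> E" "outer_edge k (cycle_pred n i) \<in> E" "spoke_edge i \<in> E"
        using i pred by (simp_all add: outer_edge_in spoke_edge_in)
      show "distinct [edge_colour k c (outer_edge k i), edge_colour k c (outer_edge k (cycle_pred n i)),
                      edge_colour k c (spoke_edge i)]"
        using i pred colour_cycle_pred_neq[OF i] spoke_colour_props[OF i]
        by (auto simp: edge_colour_outer edge_colour_spoke)
      show "edge_colour k c (outer_edge k i) < 3" "edge_colour k c (outer_edge k (cycle_pred n i)) < 3"
        "edge_colour k c (spoke_edge i) < 3"
        using i pred colour_less spoke_colour_props[OF i] by (simp_all add: edge_colour_outer edge_colour_spoke)
    qed
  next
    case True
    have "distinct [spoke_colour k c i, spoke_colour k c ((i + k) mod n), spoke_colour k c (triangle_pred k i)]"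
      by (rule triangle_spokes_distinct[OF i])
    then show ?thesis
    proof (intro unique_edge_of_colour[OF _ _ _ _ _ _ _ _ a])
      show "\<forall>e\<in>E. x \<in> e \<longleftrightarrow> e = spoke_edge i \<or> e = inner_edge k i \<or> e = inner_edge k (triangle_pred k i)"
        using edges_at_v[OF i] x True by simp
    qed (use i triangle_pred_less[of i] mod_add_k_less[of i] spoke_colour_props
         in \<open>auto simp: spoke_edge_in inner_edge_in edge_colour_spoke edge_colour_inner
                         triangle_pred_triangle_pred\<close>)
  qed
qed

lemma one_factorisation_colour_classes: "one_factorisation V E (colour_classes k c)"
  unfolding one_factorisation_def
proof
  have "(False, 0) \<in> V"
    using k_pos by (simp add: GP_verts_def)
  then have "{e \<in> E. edge_colour k c e = a} \<noteq> {}" if "a < 3" for a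
    using unique_edge_of_colour_at[OF that] by blast
  then show "partition_on E (colour_classes k c)"
    using edge_colour_less by (intro partition_onI) (auto simp: colour_classes_def disjnt_def)
  show "\<forall>M\<in>colour_classes k c. perfect_matching V E M"
    using unique_edge_of_colour_at by (auto simp: colour_classes_def perfect_matching_def)
qed

lemma factor_of_colour_classes:
  "e \<in> E \<Longrightarrow> factor_of (colour_classes k c) e = {e' \<in> E. edge_colour k c e' = edge_colour k c e}"
  using edge_colour_less
  by (intro factor_of_eq[OF one_factorisation_colour_classes]) (auto simp: colour_classes_def)

lemma colour_class_eq_iff:
  assumes "a < 3" "b < 3"
  shows "{e \<in> E. edge_colour k c e = a} = {e \<in> E. edge_colour k c e = b} \<longleftrightarrow> a = b"
  using unique_edge_of_colour_at[OF assms(1) vertex_in[of 0 False]] k_pos by auto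

lemma factor_index_colour_classes:
  assumes e: "e \<in> E"
  shows "factor_index k (colour_classes k c) e = edge_colour k c e"
proof -
  have "3 * k - 1 < n" "c 0 = 0" "c (3 * k - 1) = 1"
    using c k_pos by (simp_all add: normal_colourings_def)
  then have "edge_colour k c (outer_edge k 0) = 0" "edge_colour k c (outer_edge k (3 * k - 1)) = 1"
    using k_pos by (simp_all add: edge_colour_outer)
  then show ?thesis
    using e edge_colour_less[OF e] k_pos
    by (simp add: factor_index_def factor_of_colour_classes outer_edge_in colour_class_eq_iff)
qed

lemma outer_colouring_colour_classes: "outer_colouring k (colour_classes k c) = c"
proof
  fix i
  show "outer_colouring k (colour_classes k c) i = c i"
  proof (cases "i < n")
    case True
    then show ?thesis
      by (simp add: outer_colouring_def factor_index_colour_classes outer_edge_in edge_colour_outer)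
  next
    case False
    moreover have "c \<in> {..<n} \<rightarrow>\<^sub>E {..<3}"
      using c by (simp add: normal_colourings_def)
    ultimately show ?thesis
      by (simp add: outer_colouring_def PiE_arb[of c])
  qed
qed

end

context
  fixes F assumes F: "one_factorisation V E F"
begin

abbreviation "idx \<equiv> factor_index k F"

lemma edges_at_u0: "\<forall>e\<in>E. (False, 0) \<in> e \<longleftrightarrow> e = outer_edge k 0 \<or> e = outer_edge k (n - 1) \<or> e = spoke_edge 0"
  using edges_at_u[of 0] k_pos by (simp add: cycle_pred_def)

lemma factors_at_u0:
  "F = {factor_of F (outer_edge k 0), factor_of F (outer_edge k (n - 1)), factor_of F (spoke_edge 0)}"
  using factors_at_vertex[OF F vertex_in _ _ _ edges_at_u0] k_pos by (simp add: outer_edge_in spoke_edge_in)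

lemma factors_at_u0_distinct:
  "factor_of F (outer_edge k 0) \<noteq> factor_of F (outer_edge k (n - 1))"
  "factor_of F (outer_edge k 0) \<noteq> factor_of F (spoke_edge 0)"
  "factor_of F (outer_edge k (n - 1)) \<noteq> factor_of F (spoke_edge 0)"
proof -
  have E: "outer_edge k 0 \<in> E" "outer_edge k (n - 1) \<in> E" "spoke_edge 0 \<in> E"
    using k_pos by (simp_all add: outer_edge_in spoke_edge_in)
  have u0: "(False, 0) \<in> outer_edge k 0" "(False, 0) \<in> outer_edge k (n - 1)" "(False, 0) \<in> spoke_edge 0"
    using k_pos by (simp_all add: outer_edge_def spoke_edge_def)
  have "outer_edge k 0 \<noteq> outer_edge k (n - 1)"
    using outer_edge_inj[of 0 "n - 1"] k_pos by auto
  then show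
    "factor_of F (outer_edge k 0) \<noteq> factor_of F (outer_edge k (n - 1))"
    "factor_of F (outer_edge k 0) \<noteq> factor_of F (spoke_edge 0)"
    "factor_of F (outer_edge k (n - 1)) \<noteq> factor_of F (spoke_edge 0)"
    using factor_of_neq[OF F vertex_in[of 0 False]] E u0 outer_neq_spoke k_pos by simp_all
qed

lemma idx_less: "idx e < 3"
  by (simp add: factor_index_def)

lemma factor_of_cases:
  "e \<in> E \<Longrightarrow> factor_of F e = factor_of F (outer_edge k 0) \<or> factor_of F e = factor_of F (outer_edge k (n - 1)) \<or>
     factor_of F e = factor_of F (spoke_edge 0)"
  using factor_of_mem(1)[OF F] factors_at_u0 by blast

lemma idx_eq_iff:
  assumes "e \<in> E" "e' \<in> E"
  shows "idx e = idx e' \<longleftrightarrow> factor_of F e = factor_of F e'"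
proof -
  have distinct: "factor_of F (outer_edge k 0) \<noteq> factor_of F (outer_edge k (n - 1))"
    "factor_of F (outer_edge k 0) \<noteq> factor_of F (spoke_edge 0)"
    "factor_of F (outer_edge k (n - 1)) \<noteq> factor_of F (spoke_edge 0)"
    "factor_of F (outer_edge k (n - 1)) \<noteq> factor_of F (outer_edge k 0)"
    "factor_of F (spoke_edge 0) \<noteq> factor_of F (outer_edge k 0)"
    "factor_of F (spoke_edge 0) \<noteq> factor_of F (outer_edge k (n - 1))"
    using factors_at_u0_distinct by metis+
  from factor_of_cases[OF assms(1)] factor_of_cases[OF assms(2)] show ?thesis
    unfolding factor_index_def by (elim disjE) (simp_all add: distinct)
qed

lemma idx_neq:
  "x \<in> V \<Longrightarrow> e \<in> E \<Longrightarrow> e' \<in> E \<Longrightarrow> x \<in> e \<Longrightarrow> x \<in> e' \<Longrightarrow> e \<noteq> e' \<Longrightarrow> idx e \<noteq> idx e'"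
  using idx_eq_iff factor_of_neq[OF F] by blast

lemma idx_third_edge:
  assumes x: "x \<in> V" and E: "e1 \<in> E" "e2 \<in> E" "e3 \<in> E" and mem: "x \<in> e1" "x \<in> e2" "x \<in> e3"
    and ne: "e1 \<noteq> e2" "e3 \<noteq> e1" "e3 \<noteq> e2"
  shows "idx e3 = third_colour (idx e1) (idx e2)"
proof (rule third_colour_unique)
  show "idx e1 \<noteq> idx e2" "idx e3 \<noteq> idx e1" "idx e3 \<noteq> idx e2"
    using idx_neq[OF x E(1,2) mem(1,2) ne(1)] idx_neq[OF x E(3,1) mem(3,1) ne(2)]
      idx_neq[OF x E(3,2) mem(3,2) ne(3)] by simp_all
qed (simp_all add: idx_less)

lemma idx_spoke_edge:
  assumes i: "i < n"
  shows "idx (spoke_edge i) = third_colour (idx (outer_edge k (cycle_pred n i))) (idx (outer_edge k i))"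
proof (rule idx_third_edge[OF vertex_in[OF i]])
  have "cycle_pred n i < n"
    using i by (simp add: cycle_pred_less)
  then show "outer_edge k (cycle_pred n i) \<in> E" "outer_edge k i \<in> E" "spoke_edge i \<in> E"
    and "outer_edge k (cycle_pred n i) \<noteq> outer_edge k i"
    using i outer_edge_inj cycle_pred_neq[OF _ i] k_pos by (auto simp: outer_edge_in spoke_edge_in)
  show "(False, i) \<in> outer_edge k (cycle_pred n i)" "(False, i) \<in> outer_edge k i" "(False, i) \<in> spoke_edge i"
    by (simp_all add: outer_edge_def spoke_edge_def Suc_cycle_pred[OF i])
qed (use outer_neq_spoke in metis)+

lemma idx_triangle_distinct:
  assumes i: "i < n"
  shows "distinct [idx (inner_edge k i), idx (inner_edge k ((i + k) mod n)), idx (inner_edge k (triangle_pred k i))]"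
proof -
  let ?j = "(i + k) mod n" and ?m = "triangle_pred k i"
  have "i \<noteq> ?j \<and> ?j \<noteq> ?m \<and> ?m \<noteq> i"
    using i by (rule triangle_rotation) (use k_pos in auto)
  then have ne: "inner_edge k i \<noteq> inner_edge k ?j" "inner_edge k ?j \<noteq> inner_edge k ?m"
    "inner_edge k ?m \<noteq> inner_edge k i"
    using inner_edge_inj i mod_add_k_less triangle_pred_less by metis+
  have E: "inner_edge k i \<in> E" "inner_edge k ?j \<in> E" "inner_edge k ?m \<in> E"
    using i mod_add_k_less triangle_pred_less by (simp_all add: inner_edge_in)
  have "(?j + k) mod n = ?m"
    by (simp add: triangle_pred_def mod_add_left_eq add.assoc mult_2)
  then have "idx (inner_edge k ?j) \<noteq> idx (inner_edge k ?m)"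
    by (intro idx_neq[OF vertex_in[OF triangle_pred_less[of i], of True] E(2,3) _ _ ne(2)])
      (simp_all add: inner_edge_def)
  moreover have "idx (inner_edge k i) \<noteq> idx (inner_edge k ?j)"
    by (intro idx_neq[OF vertex_in[OF mod_add_k_less[of i], of True] E(1,2) _ _ ne(1)])
      (simp_all add: inner_edge_def)
  moreover have "idx (inner_edge k ?m) \<noteq> idx (inner_edge k i)"
    by (intro idx_neq[OF vertex_in[OF i, of True] E(3,1) _ _ ne(3)])
      (simp_all add: inner_edge_def triangle_pred_add[OF i])
  ultimately show ?thesis
    by auto
qed

lemma idx_inner_edge:
  assumes i: "i < n"
  shows "idx (inner_edge k i) = idx (spoke_edge (triangle_pred k i))"
proof -
  let ?j = "(i + k) mod n" and ?m = "triangle_pred k i"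
  have distinct: "distinct [idx (inner_edge k i), idx (inner_edge k ?j), idx (inner_edge k ?m)]"
    by (rule idx_triangle_distinct[OF i])
  have "idx (spoke_edge ?m) = third_colour (idx (inner_edge k ?m)) (idx (inner_edge k ?j))"
  proof (rule idx_third_edge[OF vertex_in[OF triangle_pred_less]])
    show "spoke_edge ?m \<in> E" "inner_edge k ?m \<in> E" "inner_edge k ?j \<in> E"
      using triangle_pred_less mod_add_k_less by (simp_all add: spoke_edge_in inner_edge_in)
    show "(True, ?m) \<in> spoke_edge ?m" "(True, ?m) \<in> inner_edge k ?m" "(True, ?m) \<in> inner_edge k ?j"
      by (simp_all add: spoke_edge_def inner_edge_def triangle_pred_def mod_add_left_eq add.assoc mult_2)
    show "inner_edge k ?m \<noteq> inner_edge k ?j"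
      using distinct by auto
  qed (use spoke_neq_inner in metis)+
  moreover have "idx (inner_edge k i) = third_colour (idx (inner_edge k ?m)) (idx (inner_edge k ?j))"
    using distinct by (intro third_colour_unique idx_less) auto
  ultimately show ?thesis
    by simp
qed

lemma edge_colour_outer_colouring: "e \<in> E \<Longrightarrow> edge_colour k (outer_colouring k F) e = idx e"
  unfolding GP_edges_eq
  using idx_spoke_edge idx_inner_edge cycle_pred_less triangle_pred_less
  by (auto simp: edge_colour_outer edge_colour_spoke edge_colour_inner outer_colouring_def spoke_colour_def)

lemma spoke_colour_outer_colouring:
  assumes i: "i < n"
  shows "spoke_colour k (outer_colouring k F) i = idx (inner_edge k ((i + k) mod n))"
proof -
  have "spoke_colour k (outer_colouring k F) i = idx (spoke_edge i)"
    using edge_colour_outer_colouring[OF spoke_edge_in[OF i]] edge_colour_spoke[OF i] by simp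
  then show ?thesis
    using idx_inner_edge[OF mod_add_k_less[of i]] triangle_pred_mod_add[OF i] by simp
qed

lemma proper_cycle_colouring_outer_colouring: "proper_cycle_colouring n (outer_colouring k F)"
  unfolding proper_cycle_colouring_def
proof (intro allI impI)
  fix i assume i: "i < n"
  let ?j = "Suc i mod n"
  have j: "?j < n"
    using i by simp
  have "outer_edge k i \<noteq> outer_edge k ?j"
    using outer_edge_inj[OF i j] mod_add_neq_self[OF i, of 1] k_pos by auto
  then have "idx (outer_edge k i) \<noteq> idx (outer_edge k ?j)"
    by (intro idx_neq[OF vertex_in[OF j, of False] outer_edge_in[OF i] outer_edge_in[OF j]])
      (simp_all add: outer_edge_def)
  then show "outer_colouring k F i \<noteq> outer_colouring k F ?j"
    using i j by (simp add: outer_colouring_def)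
qed

lemma distinct_triangle_spokes_outer_colouring: "distinct_triangle_spokes k (outer_colouring k F)"
  unfolding distinct_triangle_spokes_def
proof (intro allI impI)
  fix j assume j: "j < k"
  then have less: "j < n" "j + k < n" "j + 2 * k < n"
    by simp_all
  have mod: "(j + k) mod n = j + k" "(j + k + k) mod n = j + 2 * k" "(j + 2 * k + k) mod n = j"
    and pred: "triangle_pred k j = j + 2 * k"
    using j by (simp_all add: triangle_pred_def)
  have "distinct [idx (inner_edge k j), idx (inner_edge k ((j + k) mod n)), idx (inner_edge k (triangle_pred k j))]"
    by (rule idx_triangle_distinct[OF less(1)])
  then show "distinct [spoke_colour k (outer_colouring k F) j, spoke_colour k (outer_colouring k F) (j + k),
                       spoke_colour k (outer_colouring k F) (j + 2 * k)]"
    unfolding spoke_colour_outer_colouring[OF less(1)] spoke_colour_outer_colouring[OF less(2)]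
      spoke_colour_outer_colouring[OF less(3)] mod pred
    by auto
qed

lemma outer_colouring_normal: "outer_colouring k F \<in> normal_colourings k"
proof -
  have "outer_colouring k F \<in> {..<n} \<rightarrow>\<^sub>E {..<3}"
    by (rule PiE_I) (simp_all add: outer_colouring_def idx_less)
  moreover have "outer_colouring k F 0 = 0" "outer_colouring k F (n - 1) = 1"
    using k_pos factors_at_u0_distinct(1) by (simp_all add: outer_colouring_def factor_index_def)
  ultimately show ?thesis
    using proper_cycle_colouring_outer_colouring distinct_triangle_spokes_outer_colouring
    by (simp add: normal_colourings_def)
qed

lemma colour_class_idx:
  assumes e: "e \<in> E"
  shows "{e' \<in> E. idx e' = idx e} = factor_of F e"
proof -
  have "{e' \<in> E. idx e' = idx e} = {e' \<in> E. factor_of F e' = factor_of F e}"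
    using idx_eq_iff[OF _ e] by auto
  also have "\<dots> = factor_of F e"
    using factor_eq_Collect[OF F factor_of_mem(1)[OF F e]] by simp
  finally show ?thesis .
qed

lemma colour_classes_outer_colouring: "colour_classes k (outer_colouring k F) = F"
proof -
  let ?e0 = "outer_edge k 0" and ?e1 = "outer_edge k (n - 1)" and ?e2 = "spoke_edge 0"
  have E: "?e0 \<in> E" "?e1 \<in> E" "?e2 \<in> E"
    using k_pos by (simp_all add: outer_edge_in spoke_edge_in)
  have "{..<3} = {idx ?e0, idx ?e1, idx ?e2}"
    using factors_at_u0_distinct k_pos by (auto simp: factor_index_def)
  then have "colour_classes k (outer_colouring k F) = (\<lambda>a. {e \<in> E. idx e = a}) ` {idx ?e0, idx ?e1, idx ?e2}"
    unfolding colour_classes_def using edge_colour_outer_colouring by (intro image_cong) auto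
  also have "\<dots> = F"
    using factors_at_u0 colour_class_idx[OF E(1)] colour_class_idx[OF E(2)] colour_class_idx[OF E(3)]
    by simp
  finally show ?thesis .
qed

end

lemma card_one_factorisations: "card {F. one_factorisation V E F} = card (normal_colourings k)"
proof -
  have "bij_betw (colour_classes k) (normal_colourings k) {F. one_factorisation V E F}"
    by (rule bij_betw_byWitness[where f' = "outer_colouring k"])
      (auto simp: outer_colouring_colour_classes colour_classes_outer_colouring
        one_factorisation_colour_classes outer_colouring_normal)
  then show ?thesis
    by (rule bij_betw_same_card[symmetric])
qed

end

theorem theorem1:
  fixes k :: nat
  assumes "k \<ge> 1"
  shows "card {F. one_factorisation (GP_verts (3 * k)) (GP_edges (3 * k) k) F} =
           (if odd k then jacobsthal k else 4 * jacobsthal k)"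
proof -
  interpret GP3k k
    using assms by unfold_locales
  obtain j where k: "k = Suc j"
    using assms by (cases k) auto
  have "card {F. one_factorisation (GP_verts (3 * k)) (GP_edges (3 * k) k) F} = card (normal_colourings k)"
    by (rule card_one_factorisations)
  also have "\<dots> = card (column_sequences k)"
    by (rule bij_betw_same_card[OF bij_betw_columns[OF assms]])
  also have "\<dots> = factorisation_number k"
    using card_column_sequences[of j] closed_walk_count_eq[of j] k by simp
  finally show ?thesis
    by (simp add: factorisation_number_def)
qed

end
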